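(* Let $\Lambda\in\mathcal Q_n$. The statements within each of (i)–(iv) are equivalent. (i) For $\mathbf F\in\mathcal M^n$: (a) $\Lambda\mathbf F\prec_{\mathrm{st}}\mathbf F$; (b) $\mathbf F\prec_{\mathrm{st}}\Lambda\mathbf F$; (c) $\Lambda\mathbf F=\mathbf F$. (ii) For $\mathbf F\in\mathcal M^n$: (a) $\Lambda\otimes\mathbf F\prec_{\mathrm{st}}\mathbf F$; (b) $\mathbf F\prec_{\mathrm{st}}\Lambda\otimes\mathbf F$; (c) $\Lambda\otimes\mathbf F=\mathbf F$. (iii) For $\mathbf F\in\mathcal M_1^n$: (a) $\Lambda\otimes\mathbf F\prec_{\mathrm{cx}}\mathbf F$; (b) $\mathbf F\prec_{\mathrm{cx}}\Lambda\otimes\mathbf F$; (c) $\Lambda\otimes\mathbf F=\mathbf F$. (iv) For $\mathbf F\in\mathcal M_1^n$: (a) $\Lambda\mathbf F\prec_{\mathrm{cx}}\mathbf F$; (b) $\Lambda\mathbf F=\mathbf F$.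
   Context: $\mathcal M$ is the set of cdfs on $\mathbb{R}$, $\mathcal M_1$ those with finite mean. $\mathcal Q_n$ is the set of $n\times n$ doubly stochastic matrices. For $\Lambda=(\Lambda_{ij})\in\mathcal Q_n$ and $\mathbf F=(F_1,\dots,F_n)$: $\Lambda\mathbf F$ is the tuple with $i$-th component $\sum_j\Lambda_{ij}F_j$ (distribution mixture); $\Lambda\otimes\mathbf F=(G_1,\dots,G_n)$ with $G_i^{-1}=\sum_j\Lambda_{ij}F_j^{-1}$ (quantile mixture), where $F^{-1}(p)=\inf\{x:F(x)\ge p\}$. For cdfs, $F\prec_{\mathrm{st}}G$ means $F\ge G$ pointwise; for $F,G\in\mathcal M_1$, $F\prec_{\mathrm{cx}}G$ means $\int\phi\,\mathrm dF\le\int\phi\,\mathrm dG$ for all convex $\phi$. For tuples these orders are taken componentwise. *)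

theory Defs
  imports "HOL-Probability.Probability"
begin

definition is_cdf :: "(real \<Rightarrow> real) \<Rightarrow> bool" where
  "is_cdf F \<longleftrightarrow> mono F \<and> (\<forall>a. continuous (at_right a) F)
     \<and> (F \<longlongrightarrow> 0) at_bot \<and> (F \<longlongrightarrow> 1) at_top"

definition law :: "(real \<Rightarrow> real) \<Rightarrow> real measure" where
  "law F = interval_measure F"

definition is_cdf1 :: "(real \<Rightarrow> real) \<Rightarrow> bool" where
  "is_cdf1 F \<longleftrightarrow> is_cdf F \<and> integrable (law F) (\<lambda>x. x)"

text \<open>Integral with values in the extended reals (positive part minus negative part).
  For convex phi and F with finite mean the negative part is finite.\<close>
definition ext_integral :: "(real \<Rightarrow> real) \<Rightarrow> (real \<Rightarrow> real) \<Rightarrow> ereal" where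
  "ext_integral F \<phi> =
     enn2ereal (\<integral>\<^sup>+ x. ennreal (\<phi> x) \<partial>law F) - enn2ereal (\<integral>\<^sup>+ x. ennreal (- \<phi> x) \<partial>law F)"

definition quantile :: "(real \<Rightarrow> real) \<Rightarrow> real \<Rightarrow> real" where
  "quantile F p = Inf {x. p \<le> F x}"

text \<open>The cdf whose quantile function on (0,1) is Q (Q nondecreasing, left-continuous).\<close>
definition cdf_of_quantile :: "(real \<Rightarrow> real) \<Rightarrow> real \<Rightarrow> real" where
  "cdf_of_quantile Q x = Sup ({0} \<union> {p \<in> {0<..<1}. Q p \<le> x})"

definition doubly_stochastic :: "real^'n^'n \<Rightarrow> bool" where
  "doubly_stochastic L \<longleftrightarrow> (\<forall>i j. 0 \<le> L $ i $ j)
     \<and> (\<forall>i. (\<Sum>j\<in>UNIV. L $ i $ j) = 1) \<and> (\<forall>j. (\<Sum>i\<in>UNIV. L $ i $ j) = 1)"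

definition dmix :: "real^'n^'n \<Rightarrow> ('n \<Rightarrow> real \<Rightarrow> real) \<Rightarrow> ('n \<Rightarrow> real \<Rightarrow> real)" where
  "dmix L F = (\<lambda>i x. \<Sum>j\<in>UNIV. L $ i $ j * F j x)"

definition qmix :: "real^'n^'n \<Rightarrow> ('n \<Rightarrow> real \<Rightarrow> real) \<Rightarrow> ('n \<Rightarrow> real \<Rightarrow> real)" where
  "qmix L F = (\<lambda>i. cdf_of_quantile (\<lambda>p. \<Sum>j\<in>UNIV. L $ i $ j * quantile (F j) p))"

definition st_le :: "(real \<Rightarrow> real) \<Rightarrow> (real \<Rightarrow> real) \<Rightarrow> bool" where
  "st_le F G \<longleftrightarrow> (\<forall>x. G x \<le> F x)"

definition st_le_tuple :: "('n \<Rightarrow> real \<Rightarrow> real) \<Rightarrow> ('n \<Rightarrow> real \<Rightarrow> real) \<Rightarrow> bool" where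
  "st_le_tuple F G \<longleftrightarrow> (\<forall>i. st_le (F i) (G i))"

definition cx_le :: "(real \<Rightarrow> real) \<Rightarrow> (real \<Rightarrow> real) \<Rightarrow> bool" where
  "cx_le F G \<longleftrightarrow> (\<forall>\<phi>. convex_on UNIV \<phi> \<longrightarrow> ext_integral F \<phi> \<le> ext_integral G \<phi>)"

definition cx_le_tuple :: "('n \<Rightarrow> real \<Rightarrow> real) \<Rightarrow> ('n \<Rightarrow> real \<Rightarrow> real) \<Rightarrow> bool" where
  "cx_le_tuple F G \<longleftrightarrow> (\<forall>i. cx_le (F i) (G i))"

end

theory Submission
  imports Defs
begin

text \<open>
  In each part the mixture acts linearly, through \<open>\<Lambda>\<close>, on a quantity attached to each cdf:
  (i) the values \<open>F\<^sub>i(x)\<close>; (ii) the quantiles \<open>F\<^sub>i\<^sup>-\<^sup>1(p)\<close>; (iii) the tail integrals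
  \<open>\<integral>\<^sub>p\<^sup>1 F\<^sub>i\<^sup>-\<^sup>1\<close>; (iv) the stop-loss transforms \<open>\<integral>(x - t)\<^sub>+ dF\<^sub>i\<close>. As the columns of
  \<open>\<Lambda>\<close> sum to 1, mixing preserves the sum of that quantity over \<open>i\<close>. The assumed order makes
  the quantities before and after mixing componentwise comparable, so equal sums force
  equality, and in each case the quantity determines the cdf. For the convex order, the tail
  integral is \<open>min\<^sub>t (\<integral>(x - t)\<^sub>+ dF + t(1 - p))\<close>, attained at \<open>t = F\<^sup>-\<^sup>1(p)\<close>, so it is
  monotone in the stop-loss transform.
\<close>

section \<open>Cdfs and quantile functions\<close>

lemma real_distribution_law: "is_cdf F \<Longrightarrow> real_distribution (law F)"
  unfolding is_cdf_def law_def
  by (auto intro!: real_distribution_interval_measure simp: mono_def)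

lemma cdf_law: "is_cdf F \<Longrightarrow> cdf (law F) = F"
  unfolding is_cdf_def law_def
  by (auto intro!: cdf_interval_measure simp: mono_def)

lemma sets_law [simp]: "sets (law F) = sets borel"
  by (simp add: law_def)

lemma space_law [simp]: "space (law F) = UNIV"
  by (simp add: law_def)

lemma is_cdf_bounds:
  assumes "is_cdf F"
  shows "0 \<le> F x" "F x \<le> 1"
proof -
  interpret real_distribution "law F" by (rule real_distribution_law[OF assms])
  show "0 \<le> F x" "F x \<le> 1"
    using cdf_nonneg[of x] cdf_bounded_prob[of x] by (simp_all add: cdf_law[OF assms])
qed

lemma quantile_le_iff:
  assumes "is_cdf F" "0 < p" "p < 1"
  shows "quantile F p \<le> x \<longleftrightarrow> p \<le> F x"
proof -
  interpret right_continuous_mono F 0 1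
    using assms(1) unfolding is_cdf_def right_continuous_mono_def by blast
  show ?thesis unfolding quantile_def by (rule pseudoinverse[OF assms(2,3), symmetric])
qed

definition is_quantile_fun :: "(real \<Rightarrow> real) \<Rightarrow> bool" where
  "is_quantile_fun Q \<longleftrightarrow> mono_on {0<..<1} Q \<and> (\<forall>p\<in>{0<..<1}. (Q \<longlongrightarrow> Q p) (at_left p))"

lemma is_quantile_fun_quantile:
  assumes F: "is_cdf F"
  shows "is_quantile_fun (quantile F)"
  unfolding is_quantile_fun_def
proof (intro conjI ballI mono_onI)
  fix p p' :: real assume p: "p \<in> {0<..<1}" "p' \<in> {0<..<1}" "p \<le> p'"
  have "p' \<le> F (quantile F p')" using quantile_le_iff[OF F, of p' "quantile F p'"] p by simp
  then show "quantile F p \<le> quantile F p'" using quantile_le_iff[OF F, of p] p by simp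
next
  fix p :: real assume p: "p \<in> {0<..<1}"
  show "(quantile F \<longlongrightarrow> quantile F p) (at_left p)"
  proof (rule order_tendstoI)
    fix y assume "y < quantile F p"
    then have "F y < p" using quantile_le_iff[OF F, of p y] p by auto
    then have "eventually (\<lambda>u. u \<in> {max (F y) 0<..<p}) (at_left p)"
      using p by (intro eventually_at_left_real) auto
    then show "eventually (\<lambda>u. y < quantile F u) (at_left p)"
    proof eventually_elim
      case (elim u)
      then show ?case using quantile_le_iff[OF F, of u y] p by auto
    qed
  next
    fix y assume y: "quantile F p < y"
    have "eventually (\<lambda>u. u \<in> {0<..<p}) (at_left p)"
      using p by (intro eventually_at_left_real) auto
    then show "eventually (\<lambda>u. quantile F u < y) (at_left p)"
    proof eventually_elim
      case (elim u)
      then have "p \<le> F (quantile F p)" using quantile_le_iff[OF F, of p "quantile F p"] p by simp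
      then have "quantile F u \<le> quantile F p" using quantile_le_iff[OF F, of u] elim p by simp
      then show ?case using y by simp
    qed
  qed
qed

lemma is_quantile_fun_sum:
  assumes "\<And>j. 0 \<le> w j" "\<And>j. is_quantile_fun (Q j)"
  shows "is_quantile_fun (\<lambda>p. \<Sum>j\<in>A. w j * Q j p)"
  using assms unfolding is_quantile_fun_def
  by (auto intro!: mono_onI sum_mono mult_left_mono tendsto_sum tendsto_mult_left dest: mono_onD)

lemma cdf_of_quantile_bounds: "0 \<le> cdf_of_quantile Q x" "cdf_of_quantile Q x \<le> 1"
proof -
  have "bdd_above ({0} \<union> {p\<in>{0<..<1}. Q p \<le> x})" by (rule bdd_aboveI[of _ 1]) auto
  then show "0 \<le> cdf_of_quantile Q x" unfolding cdf_of_quantile_def by (rule cSup_upper[rotated]) simp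
  show "cdf_of_quantile Q x \<le> 1" unfolding cdf_of_quantile_def by (rule cSup_least) auto
qed

lemma cdf_of_quantile_ge_iff:
  assumes Q: "is_quantile_fun Q" and p: "0 < p" "p < 1"
  shows "p \<le> cdf_of_quantile Q x \<longleftrightarrow> Q p \<le> x"
proof
  let ?S = "{0} \<union> {p\<in>{0<..<1}. Q p \<le> x}"
  have bdd: "bdd_above ?S" by (rule bdd_aboveI[of _ 1]) auto
  show "Q p \<le> x \<Longrightarrow> p \<le> cdf_of_quantile Q x"
    unfolding cdf_of_quantile_def using p by (intro cSup_upper[OF _ bdd]) auto
  assume le: "p \<le> cdf_of_quantile Q x"
  show "Q p \<le> x"
  proof (rule ccontr)
    assume "\<not> Q p \<le> x"
    then have "eventually (\<lambda>u. x < Q u) (at_left p)"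
      using Q p unfolding is_quantile_fun_def by (intro order_tendstoD(1)) auto
    then obtain b where b: "b < p" "\<And>u. b < u \<Longrightarrow> u < p \<Longrightarrow> x < Q u"
      using eventually_at_left[of 0 p] p by auto
    have "u \<le> b" if "u \<in> {0<..<1}" "Q u \<le> x" for u
    proof (rule ccontr)
      assume "\<not> u \<le> b"
      moreover have "Q p \<le> Q u" if "p \<le> u"
        using Q p \<open>u \<in> _\<close> \<open>p \<le> u\<close> unfolding is_quantile_fun_def by (auto intro: mono_onD)
      ultimately show False
        using b(2)[of u] \<open>\<not> Q p \<le> x\<close> that by force
    qed
    then have "Sup ?S \<le> max b 0" by (intro cSup_least) force+
    then show False using le b p unfolding cdf_of_quantile_def by simp
  qed
qed

lemma quantile_cdf_of_quantile:
  assumes "is_quantile_fun Q" "0 < p" "p < 1"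
  shows "quantile (cdf_of_quantile Q) p = Q p"
proof -
  have "{x. p \<le> cdf_of_quantile Q x} = {Q p..}"
    using cdf_of_quantile_ge_iff[OF assms] by auto
  then show ?thesis unfolding quantile_def by simp
qed

lemma cdf_of_quantile_cong:
  assumes "\<And>p. 0 < p \<Longrightarrow> p < 1 \<Longrightarrow> Q p = Q' p"
  shows "cdf_of_quantile Q = cdf_of_quantile Q'"
proof -
  have "{p\<in>{0<..<1}. Q p \<le> x} = {p\<in>{0<..<1}. Q' p \<le> x}" for x using assms by auto
  then show ?thesis unfolding cdf_of_quantile_def by simp
qed

lemma cdf_of_quantile_quantile:
  assumes F: "is_cdf F"
  shows "cdf_of_quantile (quantile F) = F"
proof
  fix x
  let ?G = "cdf_of_quantile (quantile F) x"
  have iff: "p \<le> ?G \<longleftrightarrow> p \<le> F x" if "0 < p" "p < 1" for p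
    using cdf_of_quantile_ge_iff[OF is_quantile_fun_quantile[OF F] that] quantile_le_iff[OF F that]
    by simp
  show "?G = F x"
  proof (rule ccontr)
    assume "?G \<noteq> F x"
    then show False
      using iff[of "(?G + F x) / 2"] cdf_of_quantile_bounds[of "quantile F" x] is_cdf_bounds[OF F, of x]
      by (cases "?G < F x") auto
  qed
qed

lemma cdf_eq_if_quantile_eq:
  assumes "is_cdf F" "is_cdf G" "\<And>p. 0 < p \<Longrightarrow> p < 1 \<Longrightarrow> quantile F p = quantile G p"
  shows "F = G"
  by (metis assms cdf_of_quantile_cong cdf_of_quantile_quantile)

lemma quantile_le_if_st_le:
  assumes F: "is_cdf F" and G: "is_cdf G" and "st_le F G" and p: "0 < p" "p < 1"
  shows "quantile F p \<le> quantile G p"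
proof -
  have "p \<le> G (quantile G p)" using quantile_le_iff[OF G p, of "quantile G p"] by simp
  also have "\<dots> \<le> F (quantile G p)" using \<open>st_le F G\<close> by (simp add: st_le_def)
  finally show ?thesis using quantile_le_iff[OF F p] by simp
qed

section \<open>The quantile representation\<close>

abbreviation U01 :: "real measure" where
  "U01 \<equiv> restrict_space lborel {0<..<1}"

lemma prob_space_U01: "prob_space U01"
  by (auto simp add: emeasure_restrict_space space_restrict_space intro!: prob_spaceI)

lemma space_U01: "space U01 = {0<..<1}"
  by (simp add: space_restrict_space)

interpretation U01: prob_space U01
  by (rule prob_space_U01)

lemma borel_measurable_quantile_fun:
  assumes "is_quantile_fun Q"
  shows "Q \<in> borel_measurable U01"
  using assms borel_measurable_mono_on_fnc[of "{0<..<1}" Q] measurable_cong_sets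
  unfolding is_quantile_fun_def by (metis sets_lborel sets_restrict_space)

lemma law_eq_distr_quantile:
  assumes "is_cdf F"
  shows "law F = distr U01 borel (quantile F)"
proof -
  interpret cdf_distribution "law F"
    using real_distribution_law[OF assms] by (simp add: cdf_distribution_def)
  have "quantile F = (\<lambda>\<omega>. Inf {x. \<omega> \<le> cdf (law F) x})"
    by (simp add: fun_eq_iff quantile_def cdf_law[OF assms])
  then show ?thesis by (simp add: distr_I_eq_M)
qed

lemma
  assumes Q: "is_quantile_fun Q"
  shows real_distribution_distr_quantile_fun: "real_distribution (distr U01 borel Q)"
    and cdf_distr_quantile_fun: "cdf (distr U01 borel Q) = cdf_of_quantile Q"
proof -
  note meas = borel_measurable_quantile_fun[OF Q]
  show "real_distribution (distr U01 borel Q)" by (rule U01.real_distribution_distr[OF meas])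
  show "cdf (distr U01 borel Q) = cdf_of_quantile Q"
  proof
    fix x
    let ?G = "cdf_of_quantile Q x"
    have "cdf (distr U01 borel Q) x = measure U01 (Q -` {..x} \<inter> space U01)"
      unfolding cdf_def by (rule measure_distr[OF meas]) simp
    also have "Q -` {..x} \<inter> space U01 = {0<..<1} \<inter> {..?G}"
      using cdf_of_quantile_ge_iff[OF Q] by (auto simp: space_U01)
    also have "measure U01 ({0<..<1} \<inter> {..?G}) = measure lborel ({0<..<1} \<inter> {..?G})"
      by (rule measure_restrict_space) auto
    also have "\<dots> = ?G"
    proof (cases "?G < 1")
      case True
      then have "{0<..<1} \<inter> {..?G} = {0<..?G}" by auto
      then show ?thesis using cdf_of_quantile_bounds[of Q x] by simp
    next
      case False
      then have "{0<..<1} \<inter> {..?G} = {0<..<1}" by auto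
      then show ?thesis using cdf_of_quantile_bounds[of Q x] False by simp
    qed
    finally show "cdf (distr U01 borel Q) x = ?G" .
  qed
qed

lemma is_cdf_cdf_of_quantile:
  assumes "is_quantile_fun Q"
  shows "is_cdf (cdf_of_quantile Q)"
proof -
  interpret real_distribution "distr U01 borel Q"
    by (rule real_distribution_distr_quantile_fun[OF assms])
  show ?thesis
    unfolding is_cdf_def cdf_distr_quantile_fun[OF assms, symmetric]
    using cdf_nondecreasing cdf_is_right_cont cdf_lim_at_bot cdf_lim_at_top_prob
    by (auto intro: monoI)
qed

lemma law_cdf_of_quantile:
  assumes "is_quantile_fun Q"
  shows "law (cdf_of_quantile Q) = distr U01 borel Q"
  by (rule cdf_unique)
     (simp_all add: real_distribution_law is_cdf_cdf_of_quantile cdf_law assms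
       real_distribution_distr_quantile_fun cdf_distr_quantile_fun)

lemma integrable_quantile:
  assumes "is_cdf1 F"
  shows "integrable U01 (quantile F)"
proof -
  have F: "is_cdf F" and "integrable (law F) (\<lambda>x. x)" using assms by (simp_all add: is_cdf1_def)
  moreover have "quantile F \<in> borel_measurable U01"
    by (rule borel_measurable_quantile_fun[OF is_quantile_fun_quantile[OF F]])
  ultimately show ?thesis
    unfolding law_eq_distr_quantile[OF F] by (simp add: integrable_distr_eq)
qed

section \<open>The stop-loss transform\<close>

definition stop_loss :: "(real \<Rightarrow> real) \<Rightarrow> real \<Rightarrow> real" where
  "stop_loss F t = (\<integral>x. max (x - t) 0 \<partial>law F)"

lemma convex_on_hinge: "convex_on UNIV (\<lambda>x::real. max (x - t) 0)"
proof (rule convex_onI)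
  fix s x y :: real assume "0 < s" "s < 1"
  then have "(1 - s) * (x - t) + s * (y - t) \<le> (1 - s) * max (x - t) 0 + s * max (y - t) 0"
    by (intro add_mono mult_left_mono) auto
  moreover have "(1 - s) *\<^sub>R x + s *\<^sub>R y - t = (1 - s) * (x - t) + s * (y - t)"
    by (simp add: algebra_simps)
  ultimately show "max ((1 - s) *\<^sub>R x + s *\<^sub>R y - t) 0 \<le> (1 - s) * max (x - t) 0 + s * max (y - t) 0"
    using \<open>0 < s\<close> \<open>s < 1\<close> by simp
qed simp

lemma integrable_hinge:
  assumes "is_cdf1 F"
  shows "integrable (law F) (\<lambda>x. max (x - t) 0)"
proof -
  interpret real_distribution "law F" using assms real_distribution_law by (simp add: is_cdf1_def)
  show ?thesis
    using assms by (intro Bochner_Integration.integrable_max Bochner_Integration.integrable_diff)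
      (auto simp: is_cdf1_def)
qed

lemma stop_loss_nonneg: "0 \<le> stop_loss F t"
  unfolding stop_loss_def by (rule Bochner_Integration.integral_nonneg) simp

lemma nn_integral_hinge:
  assumes "is_cdf1 F"
  shows "(\<integral>\<^sup>+x. ennreal (max (x - t) 0) \<partial>law F) = ennreal (stop_loss F t)"
  unfolding stop_loss_def by (rule nn_integral_eq_integral[OF integrable_hinge[OF assms]]) simp

lemma ext_integral_hinge:
  assumes "is_cdf1 F"
  shows "ext_integral F (\<lambda>x. max (x - t) 0) = ereal (stop_loss F t)"
proof -
  have "(\<integral>\<^sup>+x. ennreal (- max (x - t) 0) \<partial>law F) = 0"
    by (simp add: ennreal_neg)
  then show ?thesis
    unfolding ext_integral_def nn_integral_hinge[OF assms]
    using stop_loss_nonneg[of F t] by (simp add: zero_ennreal.rep_eq)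
qed

lemma stop_loss_le_if_cx_le:
  assumes "is_cdf1 F" "is_cdf1 G" "cx_le F G"
  shows "stop_loss F t \<le> stop_loss G t"
proof -
  have "ext_integral F (\<lambda>x. max (x - t) 0) \<le> ext_integral G (\<lambda>x. max (x - t) 0)"
    using assms(3) convex_on_hinge[of t] unfolding cx_le_def by blast
  then show ?thesis by (simp add: ext_integral_hinge assms(1,2))
qed

lemma stop_loss_eq_integral_quantile:
  assumes "is_cdf1 F"
  shows "stop_loss F t = (\<integral>u. max (quantile F u - t) 0 \<partial>U01)"
proof -
  have F: "is_cdf F" using assms by (simp add: is_cdf1_def)
  have "quantile F \<in> borel_measurable U01"
    by (rule borel_measurable_quantile_fun[OF is_quantile_fun_quantile[OF F]])
  then show ?thesis
    unfolding stop_loss_def law_eq_distr_quantile[OF F] by (simp add: integral_distr)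
qed

lemma stop_loss_diff_bounds:
  assumes F: "is_cdf1 F" and h: "0 < h"
  shows "h * (1 - F (t + h)) \<le> stop_loss F t - stop_loss F (t + h)"
    and "stop_loss F t - stop_loss F (t + h) \<le> h * (1 - F t)"
proof -
  have Fc: "is_cdf F" using F by (simp add: is_cdf1_def)
  interpret real_distribution "law F" by (rule real_distribution_law[OF Fc])
  have diff: "stop_loss F t - stop_loss F (t + h)
      = (\<integral>x. max (x - t) 0 - max (x - (t + h)) 0 \<partial>law F)"
    unfolding stop_loss_def
    by (rule Bochner_Integration.integral_diff[symmetric, OF integrable_hinge[OF F] integrable_hinge[OF F]])
  have int_ind: "integrable (law F) (\<lambda>x. h * indicator {s<..} x)" for s
    by (intro Bochner_Integration.integrable_mult_right integrable_real_indicator)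
       (auto simp: emeasure_eq_measure)
  have int_diff: "integrable (law F) (\<lambda>x. max (x - t) 0 - max (x - (t + h)) 0)"
    by (intro Bochner_Integration.integrable_diff integrable_hinge[OF F])
  have tail: "(\<integral>x. h * indicator {s<..} x \<partial>law F) = h * (1 - F s)" for s
  proof -
    have "measure (law F) {s<..} = 1 - measure (law F) {..s}"
      using prob_compl[of "{..s}"] by (simp add: Compl_eq_Diff_UNIV[symmetric] Compl_atMost)
    then show ?thesis using cdf_law[OF Fc] by (simp add: cdf_def fun_eq_iff)
  qed
  have "(\<integral>x. h * indicator {t + h<..} x \<partial>law F)
      \<le> (\<integral>x. max (x - t) 0 - max (x - (t + h)) 0 \<partial>law F)"
    by (rule Bochner_Integration.integral_mono[OF int_ind int_diff])
       (use h in \<open>auto simp: indicator_def\<close>)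
  then show "h * (1 - F (t + h)) \<le> stop_loss F t - stop_loss F (t + h)" unfolding diff tail .
  have "(\<integral>x. max (x - t) 0 - max (x - (t + h)) 0 \<partial>law F)
      \<le> (\<integral>x. h * indicator {t<..} x \<partial>law F)"
    by (rule Bochner_Integration.integral_mono[OF int_diff int_ind])
       (use h in \<open>auto simp: indicator_def\<close>)
  then show "stop_loss F t - stop_loss F (t + h) \<le> h * (1 - F t)" unfolding diff tail .
qed

lemma cdf_le_if_stop_loss_eq:
  assumes F: "is_cdf1 F" and G: "is_cdf1 G" and eq: "\<And>t. stop_loss F t = stop_loss G t"
  shows "F t \<le> G t"
proof -
  have "(G \<longlongrightarrow> G t) (at_right t)"
    using G unfolding is_cdf1_def is_cdf_def by (simp add: continuous_within)
  moreover have "eventually (\<lambda>s. F t \<le> G s) (at_right t)"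
    using eventually_at_right_less[of t]
  proof eventually_elim
    case (elim s)
    have "(s - t) * (1 - G s) \<le> stop_loss G t - stop_loss G s"
      using stop_loss_diff_bounds(1)[OF G, of "s - t" t] elim by simp
    also have "\<dots> = stop_loss F t - stop_loss F s" using eq by simp
    also have "\<dots> \<le> (s - t) * (1 - F t)"
      using stop_loss_diff_bounds(2)[OF F, of "s - t" t] elim by simp
    finally show "F t \<le> G s" using elim by (simp add: mult_le_cancel_left_pos)
  qed
  ultimately show ?thesis by (rule tendsto_lowerbound) simp
qed

lemma cdf_eq_if_stop_loss_eq:
  assumes "is_cdf1 F" "is_cdf1 G" "\<And>t. stop_loss F t = stop_loss G t"
  shows "F = G"
  using cdf_le_if_stop_loss_eq[OF assms] cdf_le_if_stop_loss_eq[OF assms(2,1)] assms(3)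
  by (simp add: order_antisym fun_eq_iff)

section \<open>Tail integrals of quantile functions\<close>

definition tail_integral :: "(real \<Rightarrow> real) \<Rightarrow> real \<Rightarrow> real" where
  "tail_integral q p = (\<integral>u. q u * indicator {p<..} u \<partial>U01)"

lemma integrable_mult_indicator_U01:
  fixes q :: "real \<Rightarrow> real"
  assumes "integrable U01 q" "A \<in> sets borel"
  shows "integrable U01 (\<lambda>u. q u * indicator A u)"
proof (rule Bochner_Integration.integrable_bound[OF assms(1)])
  have "indicator A \<in> borel_measurable U01"
    using assms(2) by (intro measurable_restrict_space1) simp
  then show "(\<lambda>u. q u * indicator A u) \<in> borel_measurable U01"
    by (intro borel_measurable_times borel_measurable_integrable[OF assms(1)])
qed (simp add: indicator_def)

lemma integrable_const_indicator_U01: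
  fixes c :: real
  shows "A \<in> sets borel \<Longrightarrow> integrable U01 (\<lambda>u. c * indicator A u)"
  using integrable_mult_indicator_U01[of "\<lambda>_. c"] by simp

lemma integral_const_indicator_U01:
  assumes "A \<in> sets borel" "A \<subseteq> {0<..<1}"
  shows "(\<integral>u. c * indicator A u \<partial>U01) = c * measure lborel A"
  using assms by (simp add: space_U01 Int_absorb2 measure_restrict_space)

lemma
  fixes q :: "real \<Rightarrow> real"
  assumes q: "integrable U01 q" and p: "0 < p" "p < 1"
  shows tail_integral_le_hinge: "tail_integral q p \<le> (\<integral>u. max (q u - t) 0 \<partial>U01) + t * (1 - p)"
    and tail_integral_eq_hinge: "mono_on {0<..<1} q \<Longrightarrow>
      tail_integral q p = (\<integral>u. max (q u - q p) 0 \<partial>U01) + q p * (1 - p)"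
proof -
  have int_hinge: "integrable U01 (\<lambda>u. max (q u - s) 0)" for s
    using q by simp
  have int_ind: "integrable U01 (\<lambda>u. s * indicator {p<..<1} u)" for s :: real
    by (rule integrable_const_indicator_U01) simp
  have split: "(\<integral>u. max (q u - s) 0 + s * indicator {p<..<1} u \<partial>U01)
      = (\<integral>u. max (q u - s) 0 \<partial>U01) + s * (1 - p)" for s
  proof -
    have "(\<integral>u. max (q u - s) 0 + s * indicator {p<..<1} u \<partial>U01)
        = (\<integral>u. max (q u - s) 0 \<partial>U01) + (\<integral>u. s * indicator {p<..<1} u \<partial>U01)"
      by (rule Bochner_Integration.integral_add[OF int_hinge int_ind])
    also have "(\<integral>u. s * indicator {p<..<1} u \<partial>U01) = s * (1 - p)"
      using p by (subst integral_const_indicator_U01) auto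
    finally show ?thesis .
  qed
  show "tail_integral q p \<le> (\<integral>u. max (q u - t) 0 \<partial>U01) + t * (1 - p)"
    unfolding tail_integral_def split[symmetric]
    by (intro Bochner_Integration.integral_mono integrable_mult_indicator_U01 q
        Bochner_Integration.integrable_add int_hinge int_ind)
       (auto simp: indicator_def space_U01)
  assume mono: "mono_on {0<..<1} q"
  have "q u * indicator {p<..} u = max (q u - q p) 0 + q p * indicator {p<..<1} u"
    if "u \<in> {0<..<1}" for u
    using mono_onD[OF mono, of p u] mono_onD[OF mono, of u p] p that
    by (cases "p < u") (auto simp: indicator_def)
  then show "tail_integral q p = (\<integral>u. max (q u - q p) 0 \<partial>U01) + q p * (1 - p)"
    unfolding tail_integral_def split[symmetric]
    by (intro Bochner_Integration.integral_cong) (auto simp: space_U01)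
qed

lemma tail_integral_quantile_le_if_cx_le:
  assumes F: "is_cdf1 F" and G: "is_cdf1 G" and "cx_le F G" and p: "0 < p" "p < 1"
  shows "tail_integral (quantile F) p \<le> tail_integral (quantile G) p"
proof -
  let ?s = "quantile G p"
  have mono: "mono_on {0<..<1} (quantile G)"
    using is_quantile_fun_quantile G by (simp add: is_quantile_fun_def is_cdf1_def)
  have "tail_integral (quantile F) p \<le> (\<integral>u. max (quantile F u - ?s) 0 \<partial>U01) + ?s * (1 - p)"
    by (rule tail_integral_le_hinge[OF integrable_quantile[OF F] p])
  also have "\<dots> \<le> (\<integral>u. max (quantile G u - ?s) 0 \<partial>U01) + ?s * (1 - p)"
    using stop_loss_le_if_cx_le[OF assms(1-3), of ?s]
    by (simp add: stop_loss_eq_integral_quantile[OF F] stop_loss_eq_integral_quantile[OF G])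
  also have "\<dots> = tail_integral (quantile G) p"
    by (rule tail_integral_eq_hinge[OF integrable_quantile[OF G] p mono, symmetric])
  finally show ?thesis .
qed

lemma tail_integral_diff:
  assumes "integrable U01 q" "a \<le> p"
  shows "tail_integral q a - tail_integral q p = (\<integral>u. q u * indicator {a<..p} u \<partial>U01)"
proof -
  have "tail_integral q a - tail_integral q p
      = (\<integral>u. q u * indicator {a<..} u - q u * indicator {p<..} u \<partial>U01)"
    unfolding tail_integral_def
    by (rule Bochner_Integration.integral_diff[symmetric])
       (auto intro: integrable_mult_indicator_U01[OF assms(1)])
  also have "\<dots> = (\<integral>u. q u * indicator {a<..p} u \<partial>U01)"
    using assms(2) by (intro Bochner_Integration.integral_cong) (auto simp: indicator_def)
  finally show ?thesis .
qed

lemma integral_Ioc_bounds_if_mono_on: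
  assumes q: "integrable U01 q" "mono_on {0<..<1} q" and "0 < a" "a \<le> p" "p < 1"
  shows "q a * (p - a) \<le> (\<integral>u. q u * indicator {a<..p} u \<partial>U01)"
    and "(\<integral>u. q u * indicator {a<..p} u \<partial>U01) \<le> q p * (p - a)"
proof -
  have int_ind: "integrable U01 (\<lambda>u. c * indicator {a<..p} u)" for c :: real
    by (rule integrable_const_indicator_U01) simp
  have int_q: "integrable U01 (\<lambda>u. q u * indicator {a<..p} u)"
    by (rule integrable_mult_indicator_U01[OF q(1)]) simp
  have const: "(\<integral>u. c * indicator {a<..p} u \<partial>U01) = c * (p - a)" for c :: real
    using assms by (subst integral_const_indicator_U01) auto
  have "u \<in> {a<..p} \<Longrightarrow> q a \<le> q u \<and> q u \<le> q p" for u
    using assms mono_onD[OF q(2), of a u] mono_onD[OF q(2), of u p] by auto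
  then have "(\<integral>u. q a * indicator {a<..p} u \<partial>U01) \<le> (\<integral>u. q u * indicator {a<..p} u \<partial>U01)"
    and "(\<integral>u. q u * indicator {a<..p} u \<partial>U01) \<le> (\<integral>u. q p * indicator {a<..p} u \<partial>U01)"
    by (intro Bochner_Integration.integral_mono int_ind int_q; simp add: indicator_def)+
  then show "q a * (p - a) \<le> (\<integral>u. q u * indicator {a<..p} u \<partial>U01)"
    and "(\<integral>u. q u * indicator {a<..p} u \<partial>U01) \<le> q p * (p - a)"
    unfolding const .
qed

lemma quantile_le_if_tail_integral_eq:
  assumes F: "is_cdf1 F" and G: "is_cdf1 G"
    and eq: "\<And>p. 0 < p \<Longrightarrow> p < 1 \<Longrightarrow> tail_integral (quantile F) p = tail_integral (quantile G) p"
    and p: "0 < p" "p < 1"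
  shows "quantile F p \<le> quantile G p"
proof -
  have qF: "is_quantile_fun (quantile F)" and qG: "is_quantile_fun (quantile G)"
    using F G by (simp_all add: is_quantile_fun_quantile is_cdf1_def)
  have "eventually (\<lambda>a. a \<in> {0<..<p}) (at_left p)"
    using p by (intro eventually_at_left_real) auto
  then have "eventually (\<lambda>a. quantile F a \<le> quantile G p) (at_left p)"
  proof eventually_elim
    case (elim a)
    have "quantile F a * (p - a) \<le> tail_integral (quantile F) a - tail_integral (quantile F) p"
      using integral_Ioc_bounds_if_mono_on(1)[OF integrable_quantile[OF F], of a p] qF elim p
      by (simp add: tail_integral_diff integrable_quantile[OF F] is_quantile_fun_def)
    also have "\<dots> = tail_integral (quantile G) a - tail_integral (quantile G) p"
      using eq elim p by simp
    also have "\<dots> \<le> quantile G p * (p - a)"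
      using integral_Ioc_bounds_if_mono_on(2)[OF integrable_quantile[OF G], of a p] qG elim p
      by (simp add: tail_integral_diff integrable_quantile[OF G] is_quantile_fun_def)
    finally show ?case using elim by simp
  qed
  moreover have "(quantile F \<longlongrightarrow> quantile F p) (at_left p)"
    using qF p by (simp add: is_quantile_fun_def)
  ultimately show ?thesis using tendsto_upperbound by (metis trivial_limit_at_left_real)
qed

lemma cdf_eq_if_tail_integral_eq:
  assumes "is_cdf1 F" "is_cdf1 G"
    and "\<And>p. 0 < p \<Longrightarrow> p < 1 \<Longrightarrow> tail_integral (quantile F) p = tail_integral (quantile G) p"
  shows "F = G"
  using assms quantile_le_if_tail_integral_eq[OF assms] quantile_le_if_tail_integral_eq[OF assms(2,1)]
  by (intro cdf_eq_if_quantile_eq) (auto simp: is_cdf1_def intro: order_antisym)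

section \<open>Distribution mixtures\<close>

lemma is_cdf_mixture:
  fixes w :: "'n::finite \<Rightarrow> real"
  assumes w: "\<And>j. 0 \<le> w j" "(\<Sum>j\<in>UNIV. w j) = 1" and F: "\<And>j. is_cdf (F j)"
  shows "is_cdf (\<lambda>x. \<Sum>j\<in>UNIV. w j * F j x)"
  unfolding is_cdf_def
proof (intro conjI allI)
  show "mono (\<lambda>x. \<Sum>j\<in>UNIV. w j * F j x)"
    using F w unfolding is_cdf_def by (auto intro!: monoI sum_mono mult_left_mono dest: monoD)
  show "continuous (at_right a) (\<lambda>x. \<Sum>j\<in>UNIV. w j * F j x)" for a
    using F unfolding is_cdf_def by (intro continuous_sum continuous_mult continuous_const) auto
  have "((\<lambda>x. \<Sum>j\<in>UNIV. w j * F j x) \<longlongrightarrow> (\<Sum>j\<in>UNIV. w j * 0)) at_bot"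
    using F unfolding is_cdf_def by (intro tendsto_sum tendsto_mult_left) auto
  then show "((\<lambda>x. \<Sum>j\<in>UNIV. w j * F j x) \<longlongrightarrow> 0) at_bot" by simp
  have "((\<lambda>x. \<Sum>j\<in>UNIV. w j * F j x) \<longlongrightarrow> (\<Sum>j\<in>UNIV. w j * 1)) at_top"
    using F unfolding is_cdf_def by (intro tendsto_sum tendsto_mult_left) auto
  then show "((\<lambda>x. \<Sum>j\<in>UNIV. w j * F j x) \<longlongrightarrow> 1) at_top" using w by simp
qed

lemma nn_integral_mixture_measure:
  fixes w :: "'n::finite \<Rightarrow> real"
  assumes F: "\<And>j. is_cdf (F j)" and f: "f \<in> borel_measurable borel"
  shows "(\<integral>\<^sup>+x. f x \<partial>(density (count_space UNIV) (\<lambda>j. ennreal (w j)) \<bind> (\<lambda>j. law (F j))))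
       = (\<Sum>j\<in>UNIV. ennreal (w j) * (\<integral>\<^sup>+x. f x \<partial>law (F j)))"
proof -
  have "(\<lambda>j. law (F j)) \<in> measurable (count_space UNIV) (subprob_algebra borel)"
    using real_distribution_law[OF F]
    by (auto simp: space_subprob_algebra real_distribution_def intro: prob_space_imp_subprob_space)
  then have "(\<lambda>j. law (F j))
      \<in> measurable (density (count_space UNIV) (\<lambda>j. ennreal (w j))) (subprob_algebra borel)"
    by (simp add: measurable_cong_sets)
  then have "(\<integral>\<^sup>+x. f x \<partial>(density (count_space UNIV) (\<lambda>j. ennreal (w j)) \<bind> (\<lambda>j. law (F j))))
      = (\<integral>\<^sup>+j. (\<integral>\<^sup>+x. f x \<partial>law (F j)) \<partial>density (count_space UNIV) (\<lambda>j. ennreal (w j)))"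
    by (rule nn_integral_bind[OF f])
  also have "\<dots> = (\<integral>\<^sup>+j. ennreal (w j) * (\<integral>\<^sup>+x. f x \<partial>law (F j)) \<partial>count_space UNIV)"
    by (rule nn_integral_density) auto
  also have "\<dots> = (\<Sum>j\<in>UNIV. ennreal (w j) * (\<integral>\<^sup>+x. f x \<partial>law (F j)))"
    by (rule nn_integral_count_space_finite) simp
  finally show ?thesis .
qed

lemma law_mixture:
  fixes w :: "'n::finite \<Rightarrow> real"
  assumes w: "\<And>j. 0 \<le> w j" "(\<Sum>j\<in>UNIV. w j) = 1" and F: "\<And>j. is_cdf (F j)"
  shows "law (\<lambda>x. \<Sum>j\<in>UNIV. w j * F j x)
       = density (count_space UNIV) (\<lambda>j. ennreal (w j)) \<bind> (\<lambda>j. law (F j))" (is "law ?G = ?M")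
proof -
  have sets_M: "sets ?M = sets borel"
    by (rule sets_bind) auto
  have emeasure_M: "emeasure ?M A = (\<Sum>j\<in>UNIV. ennreal (w j) * emeasure (law (F j)) A)"
    if "A \<in> sets borel" for A
    using nn_integral_mixture_measure[OF F, of "indicator A" w] that sets_M
    by (simp add: nn_integral_indicator)
  have emeasure_law: "emeasure (law (F j)) A = ennreal (measure (law (F j)) A)" for j A
    using real_distribution_law[OF F]
    by (simp add: real_distribution_def prob_space_def finite_measure.emeasure_eq_measure)
  have cdf_F: "measure (law (F j)) {..x} = F j x" for j x
    using cdf_law[OF F, of j] by (simp add: cdf_def fun_eq_iff)
  have cdf_M: "emeasure ?M {..x} = ennreal (?G x)" for x
    using w is_cdf_bounds[OF F]
    by (simp add: emeasure_M emeasure_law cdf_F ennreal_mult[symmetric] sum_ennreal)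
  have "emeasure (law (F j)) UNIV = 1" for j
    using real_distribution_law[OF F, of j]
    by (metis prob_space.emeasure_space_1 real_distribution_def space_law)
  then have "emeasure ?M (space ?M) = ennreal 1"
    using w emeasure_M[of UNIV] by (simp add: sets_eq_imp_space_eq[OF sets_M] sum_ennreal)
  then have "finite_borel_measure ?M"
    using sets_M
    by (auto intro: finite_measureI simp: finite_borel_measure_def finite_borel_measure_axioms_def)
  moreover have G: "is_cdf ?G" by (rule is_cdf_mixture[OF w F])
  moreover have "cdf (law ?G) = cdf ?M"
    unfolding cdf_law[OF G] using cdf_M is_cdf_bounds[OF G] by (simp add: cdf_def measure_def)
  ultimately show ?thesis
    by (intro cdf_unique') (simp_all add: real_distribution.finite_borel_measure_M real_distribution_law)
qed

lemma nn_integral_law_mixture: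
  fixes w :: "'n::finite \<Rightarrow> real"
  assumes "\<And>j. 0 \<le> w j" "(\<Sum>j\<in>UNIV. w j) = 1" "\<And>j. is_cdf (F j)" "f \<in> borel_measurable borel"
  shows "(\<integral>\<^sup>+x. f x \<partial>law (\<lambda>x. \<Sum>j\<in>UNIV. w j * F j x))
       = (\<Sum>j\<in>UNIV. ennreal (w j) * (\<integral>\<^sup>+x. f x \<partial>law (F j)))"
  using assms by (simp add: law_mixture nn_integral_mixture_measure)

lemma is_cdf1_mixture:
  fixes w :: "'n::finite \<Rightarrow> real"
  assumes w: "\<And>j. 0 \<le> w j" "(\<Sum>j\<in>UNIV. w j) = 1" and F: "\<And>j. is_cdf1 (F j)"
  shows "is_cdf1 (\<lambda>x. \<Sum>j\<in>UNIV. w j * F j x)"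
proof -
  have Fc: "is_cdf (F j)" for j using F by (simp add: is_cdf1_def)
  have "(\<integral>\<^sup>+x. ennreal \<bar>x\<bar> \<partial>law (F j)) = ennreal (\<integral>x. \<bar>x\<bar> \<partial>law (F j))" for j
    using F[of j] by (intro nn_integral_eq_integral) (auto simp: is_cdf1_def)
  then have "(\<integral>\<^sup>+x. ennreal \<bar>x\<bar> \<partial>law (\<lambda>x. \<Sum>j\<in>UNIV. w j * F j x)) < \<infinity>"
    using w by (simp add: nn_integral_law_mixture[OF w Fc] ennreal_mult[symmetric])
  moreover have "(\<lambda>x. x) \<in> borel_measurable (law (\<lambda>x. \<Sum>j\<in>UNIV. w j * F j x))"
    by (simp add: measurable_cong_sets[OF sets_law refl])
  ultimately show ?thesis
    using is_cdf_mixture[OF w Fc] by (simp add: is_cdf1_def integrable_iff_bounded)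
qed

lemma stop_loss_mixture:
  fixes w :: "'n::finite \<Rightarrow> real"
  assumes w: "\<And>j. 0 \<le> w j" "(\<Sum>j\<in>UNIV. w j) = 1" and F: "\<And>j. is_cdf1 (F j)"
  shows "stop_loss (\<lambda>x. \<Sum>j\<in>UNIV. w j * F j x) t = (\<Sum>j\<in>UNIV. w j * stop_loss (F j) t)"
proof -
  have Fc: "is_cdf (F j)" for j using F by (simp add: is_cdf1_def)
  have "ennreal (stop_loss (\<lambda>x. \<Sum>j\<in>UNIV. w j * F j x) t)
      = (\<Sum>j\<in>UNIV. ennreal (w j) * (\<integral>\<^sup>+x. ennreal (max (x - t) 0) \<partial>law (F j)))"
    by (simp add: nn_integral_hinge[OF is_cdf1_mixture[OF w F], symmetric]
        nn_integral_law_mixture[OF w Fc])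
  also have "\<dots> = ennreal (\<Sum>j\<in>UNIV. w j * stop_loss (F j) t)"
    using w stop_loss_nonneg unfolding nn_integral_hinge[OF F]
    by (simp add: ennreal_mult[symmetric] sum_ennreal)
  finally show ?thesis
    using w stop_loss_nonneg by (simp add: sum_nonneg)
qed

section \<open>Quantile mixtures\<close>

lemma quantile_qmix:
  assumes "\<And>i j. 0 \<le> L $ i $ j" "\<And>j. is_cdf (F j)" "0 < p" "p < 1"
  shows "quantile (qmix L F i) p = (\<Sum>j\<in>UNIV. L $ i $ j * quantile (F j) p)"
  unfolding qmix_def using assms
  by (simp add: quantile_cdf_of_quantile is_quantile_fun_sum is_quantile_fun_quantile)

lemma is_cdf_qmix:
  assumes "\<And>i j. 0 \<le> L $ i $ j" "\<And>j. is_cdf (F j)"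
  shows "is_cdf (qmix L F i)"
  unfolding qmix_def using assms
  by (simp add: is_cdf_cdf_of_quantile is_quantile_fun_sum is_quantile_fun_quantile)

lemma is_cdf1_qmix:
  assumes L: "\<And>i j. 0 \<le> L $ i $ j" and F: "\<And>j. is_cdf1 (F j)"
  shows "is_cdf1 (qmix L F i)"
proof -
  let ?Q = "\<lambda>p. \<Sum>j\<in>UNIV. L $ i $ j * quantile (F j) p"
  have Q: "is_quantile_fun ?Q"
    using assms by (simp add: is_quantile_fun_sum is_quantile_fun_quantile is_cdf1_def)
  have "integrable U01 ?Q"
    using F by (intro Bochner_Integration.integrable_sum Bochner_Integration.integrable_mult_right
        integrable_quantile)
  moreover have "?Q \<in> borel_measurable U01"
    by (rule borel_measurable_quantile_fun[OF Q])
  ultimately have "integrable (law (qmix L F i)) (\<lambda>x. x)"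
    unfolding qmix_def law_cdf_of_quantile[OF Q] by (simp add: integrable_distr_eq)
  then show ?thesis
    using is_cdf_qmix[OF L] F by (simp add: is_cdf1_def)
qed

lemma tail_integral_qmix:
  assumes L: "\<And>i j. 0 \<le> L $ i $ j" and F: "\<And>j. is_cdf1 (F j)"
  shows "tail_integral (quantile (qmix L F i)) p
    = (\<Sum>j\<in>UNIV. L $ i $ j * tail_integral (quantile (F j)) p)"
proof -
  have Fc: "is_cdf (F j)" for j using F by (simp add: is_cdf1_def)
  have "tail_integral (quantile (qmix L F i)) p
      = (\<integral>u. (\<Sum>j\<in>UNIV. L $ i $ j * (quantile (F j) u * indicator {p<..} u)) \<partial>U01)"
    unfolding tail_integral_def
    by (intro Bochner_Integration.integral_cong)
       (auto simp: space_U01 quantile_qmix[OF L Fc] sum_distrib_right mult.assoc)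
  also have "\<dots> = (\<Sum>j\<in>UNIV. L $ i $ j * tail_integral (quantile (F j)) p)"
    unfolding tail_integral_def
    by (subst Bochner_Integration.integral_sum)
       (auto intro: Bochner_Integration.integrable_mult_right integrable_mult_indicator_U01
         integrable_quantile[OF F])
  finally show ?thesis .
qed

section \<open>Doubly stochastic mixing\<close>

lemma sum_mono_eq_imp_eq:
  fixes f g :: "'a \<Rightarrow> 'b::ordered_cancel_comm_monoid_add"
  assumes "finite A" "\<And>i. i \<in> A \<Longrightarrow> f i \<le> g i" "sum f A = sum g A" "i \<in> A"
  shows "f i = g i"
  using sum_strict_mono_ex1[OF assms(1), of f g] assms
  by (metis order_less_irrefl order.order_iff_strict)

lemma doubly_stochastic_nonneg: "doubly_stochastic L \<Longrightarrow> 0 \<le> L $ i $ j"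
  by (simp add: doubly_stochastic_def)

lemma doubly_stochastic_row_sum: "doubly_stochastic L \<Longrightarrow> (\<Sum>j\<in>UNIV. L $ i $ j) = 1"
  by (simp add: doubly_stochastic_def)

lemma doubly_stochastic_sum_mix:
  assumes "doubly_stochastic L"
  shows "(\<Sum>i\<in>UNIV. \<Sum>j\<in>UNIV. L $ i $ j * v j) = (\<Sum>j\<in>UNIV. v j)"
proof -
  have "(\<Sum>i\<in>UNIV. \<Sum>j\<in>UNIV. L $ i $ j * v j) = (\<Sum>j\<in>UNIV. (\<Sum>i\<in>UNIV. L $ i $ j) * v j)"
    by (subst sum.swap) (simp add: sum_distrib_right)
  then show ?thesis using assms by (simp add: doubly_stochastic_def)
qed

lemma doubly_stochastic_mix_eq_if_comparable:
  assumes ds: "doubly_stochastic L"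
    and "(\<forall>i. (\<Sum>j\<in>UNIV. L $ i $ j * v j) \<le> v i) \<or> (\<forall>i. v i \<le> (\<Sum>j\<in>UNIV. L $ i $ j * v j))"
  shows "(\<Sum>j\<in>UNIV. L $ i $ j * v j) = v i"
  using assms(2) sum_mono_eq_imp_eq[of UNIV "\<lambda>i. \<Sum>j\<in>UNIV. L $ i $ j * v j" v i]
    sum_mono_eq_imp_eq[of UNIV v "\<lambda>i. \<Sum>j\<in>UNIV. L $ i $ j * v j" i] doubly_stochastic_sum_mix[OF ds]
  by auto

section \<open>The four fixed-point characterisations\<close>

lemma dmix_fixed_if_st_comparable:
  assumes "doubly_stochastic L" "st_le_tuple (dmix L F) F \<or> st_le_tuple F (dmix L F)"
  shows "dmix L F = F"
proof (intro ext)
  fix i x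
  show "dmix L F i x = F i x"
    using assms unfolding dmix_def st_le_tuple_def st_le_def
    by (intro doubly_stochastic_mix_eq_if_comparable) auto
qed

lemma qmix_fixed_if_st_comparable:
  assumes ds: "doubly_stochastic L" and F: "\<And>j. is_cdf (F j)"
    and "st_le_tuple (qmix L F) F \<or> st_le_tuple F (qmix L F)"
  shows "qmix L F = F"
proof
  fix i
  note L = doubly_stochastic_nonneg[OF ds]
  have G: "is_cdf (qmix L F k)" for k by (rule is_cdf_qmix[OF L F])
  show "qmix L F i = F i"
  proof (rule cdf_eq_if_quantile_eq[OF G F])
    fix p :: real assume p: "0 < p" "p < 1"
    have "(\<forall>k. quantile (qmix L F k) p \<le> quantile (F k) p) \<or> (\<forall>k. quantile (F k) p \<le> quantile (qmix L F k) p)"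
      using assms(3) quantile_le_if_st_le[OF G F _ p] quantile_le_if_st_le[OF F G _ p]
      unfolding st_le_tuple_def by blast
    then show "quantile (qmix L F i) p = quantile (F i) p"
      unfolding quantile_qmix[OF L F p] by (rule doubly_stochastic_mix_eq_if_comparable[OF ds])
  qed
qed

lemma qmix_fixed_if_cx_comparable:
  assumes ds: "doubly_stochastic L" and F: "\<And>j. is_cdf1 (F j)"
    and "cx_le_tuple (qmix L F) F \<or> cx_le_tuple F (qmix L F)"
  shows "qmix L F = F"
proof
  fix i
  note L = doubly_stochastic_nonneg[OF ds]
  have G: "is_cdf1 (qmix L F k)" for k by (rule is_cdf1_qmix[OF L F])
  show "qmix L F i = F i"
  proof (rule cdf_eq_if_tail_integral_eq[OF G F])
    fix p :: real assume p: "0 < p" "p < 1"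
    let ?T = "\<lambda>H. tail_integral (quantile H) p"
    have "(\<forall>k. ?T (qmix L F k) \<le> ?T (F k)) \<or> (\<forall>k. ?T (F k) \<le> ?T (qmix L F k))"
      using assms(3) tail_integral_quantile_le_if_cx_le[OF G F _ p]
        tail_integral_quantile_le_if_cx_le[OF F G _ p]
      unfolding cx_le_tuple_def by blast
    then show "?T (qmix L F i) = ?T (F i)"
      unfolding tail_integral_qmix[OF L F] by (rule doubly_stochastic_mix_eq_if_comparable[OF ds])
  qed
qed

lemma dmix_fixed_if_cx_le:
  assumes ds: "doubly_stochastic L" and F: "\<And>j. is_cdf1 (F j)" and "cx_le_tuple (dmix L F) F"
  shows "dmix L F = F"
proof
  fix i
  note w = doubly_stochastic_nonneg[OF ds] doubly_stochastic_row_sum[OF ds]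
  have G: "is_cdf1 (dmix L F k)" for k
    unfolding dmix_def by (rule is_cdf1_mixture[OF w F])
  have stop_loss_dmix: "stop_loss (dmix L F k) t = (\<Sum>j\<in>UNIV. L $ k $ j * stop_loss (F j) t)" for k t
    unfolding dmix_def by (rule stop_loss_mixture[OF w F])
  show "dmix L F i = F i"
  proof (rule cdf_eq_if_stop_loss_eq[OF G F])
    fix t
    have "\<forall>k. stop_loss (dmix L F k) t \<le> stop_loss (F k) t"
      using assms(3) stop_loss_le_if_cx_le[OF G F] unfolding cx_le_tuple_def by blast
    then show "stop_loss (dmix L F i) t = stop_loss (F i) t"
      unfolding stop_loss_dmix by (intro doubly_stochastic_mix_eq_if_comparable[OF ds]) simp
  qed
qed

lemma st_le_tuple_refl: "st_le_tuple F F"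
  by (simp add: st_le_tuple_def st_le_def)

lemma cx_le_tuple_refl: "cx_le_tuple F F"
  by (simp add: cx_le_tuple_def cx_le_def)

theorem proposition10:
  fixes L :: "real^'n^'n"
  assumes "doubly_stochastic L"
  shows
    "(\<forall>F. (\<forall>i. is_cdf (F i)) \<longrightarrow>
        ((st_le_tuple (dmix L F) F \<longleftrightarrow> dmix L F = F) \<and>
         (st_le_tuple F (dmix L F) \<longleftrightarrow> dmix L F = F))) \<and>
    (\<forall>F. (\<forall>i. is_cdf (F i)) \<longrightarrow>
        ((st_le_tuple (qmix L F) F \<longleftrightarrow> qmix L F = F) \<and>
         (st_le_tuple F (qmix L F) \<longleftrightarrow> qmix L F = F))) \<and>
    (\<forall>F. (\<forall>i. is_cdf1 (F i)) \<longrightarrow>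
        ((cx_le_tuple (qmix L F) F \<longleftrightarrow> qmix L F = F) \<and>
         (cx_le_tuple F (qmix L F) \<longleftrightarrow> qmix L F = F))) \<and>
    (\<forall>F. (\<forall>i. is_cdf1 (F i)) \<longrightarrow>
        (cx_le_tuple (dmix L F) F \<longleftrightarrow> dmix L F = F))"
proof (intro conjI allI impI)
  fix F :: "'n \<Rightarrow> real \<Rightarrow> real"
  show "st_le_tuple (dmix L F) F \<longleftrightarrow> dmix L F = F" "st_le_tuple F (dmix L F) \<longleftrightarrow> dmix L F = F"
    using dmix_fixed_if_st_comparable[OF assms, of F] st_le_tuple_refl by metis+
  assume "\<forall>i. is_cdf (F i)"
  then show "st_le_tuple (qmix L F) F \<longleftrightarrow> qmix L F = F" "st_le_tuple F (qmix L F) \<longleftrightarrow> qmix L F = F"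
    using qmix_fixed_if_st_comparable[OF assms, of F] st_le_tuple_refl by metis+
next
  fix F :: "'n \<Rightarrow> real \<Rightarrow> real"
  assume "\<forall>i. is_cdf1 (F i)"
  then show "cx_le_tuple (qmix L F) F \<longleftrightarrow> qmix L F = F" "cx_le_tuple F (qmix L F) \<longleftrightarrow> qmix L F = F"
    and "cx_le_tuple (dmix L F) F \<longleftrightarrow> dmix L F = F"
    using qmix_fixed_if_cx_comparable[OF assms, of F] dmix_fixed_if_cx_le[OF assms, of F] cx_le_tuple_refl
    by metis+
qed

end
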